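(* Let $(\Omega,\mathcal{F})$ be a measurable space and $T:\Omega\to\Omega$ a measurable map. Let $\mathbb{V}(A)=\sup_{P\in\Theta}P(A)$, $A\in\mathcal{F}$, be an upper probability, where $\Theta=\{P \text{ probability on }(\Omega,\mathcal{F}) : P(A)\le \mathbb{V}(A)\ \forall A\in\mathcal{F}\}$. Assume $\mathbb{V}$ is continuous (from above), $T$-invariant, and $T$-ergodic. Let $\Theta_0$ (resp. $\Theta_*$) be the set of $T$-invariant (resp. $T$-ergodic) probabilities in $\Theta$. Then $\Theta_*$ is a finite set, and $\Theta_0=\operatorname{co}\Theta_*$, the convex hull of $\Theta_*$.
   Context: $\mathcal{I}=\{A\in\mathcal{F}: T^{-1}A=A\}$ is the $T$-invariant $\sigma$-algebra. $\mathbb{V}$ is continuous if $\mathbb{V}(A_n)\to 0$ whenever $A_n\in\mathcal{F}$, $A_n\downarrow\emptyset$. $\mathbb{V}$ is $T$-invariant if $\mathbb{V}(T^{-1}A)=\mathbb{V}(A)$ for all $A\in\mathcal{F}$. A continuous upper probability $\mathbb{V}$ is $T$-ergodic if $\mathbb{V}(A)\in\{0,1\}$ for every $A\in\mathcal{I}$. A probability $P$ is $T$-invariant if $P(T^{-1}A)=P(A)$ for all $A\in\mathcal{F}$, and $T$-ergodic if it is $T$-invariant and $P(A)\in\{0,1\}$ for all $A\in\mathcal{I}$. *)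

theory Defs
  imports "HOL-Probability.Probability"
begin

text \<open>Probabilities on the measurable space underlying M (only sets M matters).\<close>
definition probs_on :: "'a measure \<Rightarrow> 'a measure set" where
  "probs_on M = {P. prob_space P \<and> sets P = sets M}"

definition core :: "'a measure \<Rightarrow> ('a set \<Rightarrow> real) \<Rightarrow> 'a measure set" where
  "core M V = {P \<in> probs_on M. \<forall>A\<in>sets M. measure P A \<le> V A}"

definition upper_probability :: "'a measure \<Rightarrow> ('a set \<Rightarrow> real) \<Rightarrow> bool" where
  "upper_probability M V \<longleftrightarrow> core M V \<noteq> {} \<and>
     (\<forall>A\<in>sets M. V A = (SUP P\<in>core M V. measure P A))"

definition continuous_capacity :: "'a measure \<Rightarrow> ('a set \<Rightarrow> real) \<Rightarrow> bool" where
  "continuous_capacity M V \<longleftrightarrow>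
     (\<forall>An. (\<forall>n. An n \<in> sets M) \<longrightarrow> decseq An \<longrightarrow> (\<Inter>n. An n) = {} \<longrightarrow>
        (\<lambda>n. V (An n)) \<longlonglongrightarrow> 0)"

definition invariant_sets :: "'a measure \<Rightarrow> ('a \<Rightarrow> 'a) \<Rightarrow> 'a set set" where
  "invariant_sets M T = {A \<in> sets M. T -` A \<inter> space M = A}"

definition T_invariant_fun :: "'a measure \<Rightarrow> ('a \<Rightarrow> 'a) \<Rightarrow> ('a set \<Rightarrow> real) \<Rightarrow> bool" where
  "T_invariant_fun M T V \<longleftrightarrow> (\<forall>A\<in>sets M. V (T -` A \<inter> space M) = V A)"

definition T_ergodic_fun :: "'a measure \<Rightarrow> ('a \<Rightarrow> 'a) \<Rightarrow> ('a set \<Rightarrow> real) \<Rightarrow> bool" where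
  "T_ergodic_fun M T V \<longleftrightarrow> (\<forall>A\<in>invariant_sets M T. V A \<in> {0, 1})"

definition invariant_prob :: "'a measure \<Rightarrow> ('a \<Rightarrow> 'a) \<Rightarrow> 'a measure \<Rightarrow> bool" where
  "invariant_prob M T P \<longleftrightarrow> P \<in> probs_on M \<and> T_invariant_fun M T (measure P)"

definition ergodic_prob :: "'a measure \<Rightarrow> ('a \<Rightarrow> 'a) \<Rightarrow> 'a measure \<Rightarrow> bool" where
  "ergodic_prob M T P \<longleftrightarrow> invariant_prob M T P \<and> T_ergodic_fun M T (measure P)"

definition prob_convex_hull :: "'a measure \<Rightarrow> 'a measure set \<Rightarrow> 'a measure set" where
  "prob_convex_hull M S = {P \<in> probs_on M. \<exists>F c. finite F \<and> F \<subseteq> S \<and>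
      (\<forall>Q\<in>F. 0 \<le> c Q) \<and> (\<Sum>Q\<in>F. c Q) = (1::real) \<and>
      (\<forall>A\<in>sets M. measure P A = (\<Sum>Q\<in>F. c Q * measure Q A))}"

end

theory Submission
  imports Defs
begin

text \<open>
  Call an invariant set \<open>C\<close> an atom if \<open>V C = 1\<close> and \<open>C\<close> cannot be split into two invariant
  sets of positive upper probability. Continuity of \<open>V\<close> forbids infinitely many disjoint sets
  of upper probability \<open>1\<close>; together with ergodicity of \<open>V\<close> this shows that finitely many
  disjoint atoms cover the space up to a \<open>V\<close>-null set, and that every invariant set of upper
  probability \<open>1\<close> contains an atom.

  An invariant probability is determined by its values on invariant sets. On an atom these
  values are forced to be \<open>0\<close> or \<open>1\<close>, so each atom carries at most one invariant probability of
  the core with full mass, and such a probability is ergodic. It exists: cluster points of Cesaro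
  averages of a member of the core are invariant probabilities below \<open>V\<close> (countable additivity
  coming from continuity of \<open>V\<close>), and conditioning them on the atom gives, up to an arbitrarily
  small error, probabilities below \<open>V\<close> that all coincide by uniqueness.

  Hence the ergodic members of the core are exactly these measures, one for each atom, and an
  invariant member of the core is the convex combination of its conditionings on the atoms.
\<close>

lemma exists_cluster_filter:
  fixes s :: "nat \<Rightarrow> 'b \<Rightarrow> real"
  assumes "\<And>n x. s n x \<in> {0..1}"
  obtains F R where "F \<noteq> bot" "F \<le> sequentially" "\<And>x. ((\<lambda>n. s n x) \<longlongrightarrow> R x) F"
proof -
  \<comment> \<open>\<open>R\<close> is a cluster point of \<open>s\<close> in the compact cube (Tychonoff), and \<open>F\<close> is the trace of
    its neighbourhood filter on the indices.\<close>
  have "compact (Pi\<^sub>E UNIV (\<lambda>_. {0..1::real}))"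
    using compactin_PiE[of "\<lambda>_. euclidean" UNIV "\<lambda>_. {0..1::real}"]
    by (simp add: euclidean_product_topology)
  moreover have "eventually (\<lambda>g. g \<in> Pi\<^sub>E UNIV (\<lambda>_. {0..1})) (filtermap s sequentially)"
    using assms by (simp add: eventually_filtermap PiE_UNIV_domain)
  ultimately obtain R where R: "inf (nhds R) (filtermap s sequentially) \<noteq> bot"
    unfolding compact_filter by (metis filtermap_bot_iff sequentially_bot)
  define F where "F = inf sequentially (filtercomap s (nhds R))"
  have "F \<noteq> bot"
  proof
    assume "F = bot"
    then have "eventually (\<lambda>_. False) (inf sequentially (filtercomap s (nhds R)))"
      unfolding F_def by simp
    then obtain P Q' where P: "eventually P sequentially"
      and "eventually Q' (filtercomap s (nhds R))" and "\<And>n. P n \<Longrightarrow> Q' n \<Longrightarrow> False"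
      unfolding eventually_inf by blast
    then obtain Q where Q: "eventually Q (nhds R)" and PQ: "\<And>n. P n \<Longrightarrow> Q (s n) \<Longrightarrow> False"
      unfolding eventually_filtercomap by blast
    have "eventually (\<lambda>g. \<not> Q g) (filtermap s sequentially)"
      using P PQ unfolding eventually_filtermap by (blast intro: eventually_mono)
    with Q have "eventually (\<lambda>_. False) (inf (nhds R) (filtermap s sequentially))"
      unfolding eventually_inf by blast
    with R show False by (simp add: eventually_False)
  qed
  moreover have "F \<le> sequentially" unfolding F_def by simp
  moreover have "((\<lambda>n. s n x) \<longlongrightarrow> R x) F" for x
  proof -
    have "(s \<longlongrightarrow> R) F"
      unfolding F_def by (rule filterlim_mono[OF filterlim_filtercomap]) auto
    then show ?thesis
      using continuous_on_tendsto_compose[of UNIV "\<lambda>g. g x" s R F] by simp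
  qed
  ultimately show ?thesis using that by blast
qed

lemma exists_membership_change:
  "(x \<in> A 0) \<noteq> (x \<in> A k) \<Longrightarrow> \<exists>j<k. (x \<in> A j) \<noteq> (x \<in> A (Suc j))"
  by (induction k) (auto intro: less_SucI)

lemma disjoint_family_decseq_Diff:
  "(\<And>n. A (Suc n) \<subseteq> A n) \<Longrightarrow> disjoint_family (\<lambda>n. A n - A (Suc n))"
  using disjoint_family_Suc[of "\<lambda>n. - A n"] by (simp add: Diff_eq Int_commute)

lemma sum_eq_1_imp_ex_nonzero: "sum f A = (1::real) \<Longrightarrow> \<exists>x\<in>A. f x \<noteq> 0"
  using sum.neutral by force

lemma prob_space_eq_if_measure_le:
  assumes "prob_space \<mu>" "prob_space \<nu>" and sets: "sets \<nu> = sets \<mu>"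
    and le: "\<And>A. A \<in> sets \<mu> \<Longrightarrow> measure \<nu> A \<le> measure \<mu> A"
  shows "\<nu> = \<mu>"
proof (rule measure_eqI[OF sets])
  interpret \<mu>: prob_space \<mu> by fact
  interpret \<nu>: prob_space \<nu> by fact
  fix A assume "A \<in> sets \<nu>"
  then have A: "A \<in> sets \<mu>" using sets by simp
  have "measure \<nu> (space \<mu> - A) \<le> measure \<mu> (space \<mu> - A)"
    using A by (intro le) auto
  then have "measure \<mu> A \<le> measure \<nu> A"
    using A \<mu>.prob_compl \<nu>.prob_compl sets sets_eq_imp_space_eq[OF sets] by simp
  with le[OF A] show "emeasure \<nu> A = emeasure \<mu> A"
    by (simp add: \<mu>.emeasure_eq_measure \<nu>.emeasure_eq_measure)
qed

lemma exists_midpoint_prob: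
  assumes \<mu>: "prob_space \<mu>" and \<nu>: "prob_space \<nu>" and sets: "sets \<nu> = sets \<mu>"
  obtains \<rho> where "prob_space \<rho>" "sets \<rho> = sets \<mu>"
    "\<And>A. A \<in> sets \<mu> \<Longrightarrow> measure \<rho> A = (measure \<mu> A + measure \<nu> A) / 2"
proof -
  interpret \<mu>: prob_space \<mu> by fact
  interpret \<nu>: prob_space \<nu> by fact
  define f where "f A = ennreal (1/2) * (emeasure \<mu> A + emeasure \<nu> A)" for A
  define \<rho> where "\<rho> = measure_of (space \<mu>) (sets \<mu>) f"
  have "countably_additive (sets \<mu>) f"
  proof (rule countably_additiveI)
    fix A :: "nat \<Rightarrow> _" assume "range A \<subseteq> sets \<mu>" "disjoint_family A"
    then show "(\<Sum>i. f (A i)) = f (\<Union>i. A i)"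
      using sets unfolding f_def
      by (simp add: suminf_add[symmetric] suminf_emeasure)
  qed
  then have em: "emeasure \<rho> A = f A" if "A \<in> sets \<mu>" for A
    unfolding \<rho>_def using that
    by (intro emeasure_measure_of_sigma) (auto simp: positive_def f_def sets.sigma_algebra_axioms)
  have sets_\<rho>: "sets \<rho> = sets \<mu>" and space_\<rho>: "space \<rho> = space \<mu>"
    unfolding \<rho>_def by simp_all
  have f_eq: "f A = ennreal ((measure \<mu> A + measure \<nu> A) / 2)" for A
    unfolding f_def \<mu>.emeasure_eq_measure \<nu>.emeasure_eq_measure
    by (simp add: ennreal_mult[symmetric] ennreal_plus[symmetric] del: ennreal_plus ennreal_half)
  have "emeasure \<rho> (space \<rho>) = f (space \<mu>)" using em space_\<rho> by simp
  also have "\<dots> = 1"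
    using f_eq \<mu>.prob_space \<nu>.prob_space sets_eq_imp_space_eq[OF sets] by simp
  finally have "prob_space \<rho>" by (rule prob_spaceI)
  moreover have "measure \<rho> A = (measure \<mu> A + measure \<nu> A) / 2" if "A \<in> sets \<mu>" for A
    using em[OF that] by (simp add: measure_def f_eq del: ennreal_half)
  ultimately show ?thesis using that sets_\<rho> by blast
qed

lemma (in finite_measure) null_sets_subset_if_measure_le:
  assumes sets: "sets N = sets M" and le: "\<And>A. A \<in> sets M \<Longrightarrow> measure M A \<le> c * measure N A"
  shows "null_sets N \<subseteq> null_sets M"
proof
  fix A assume "A \<in> null_sets N"
  then have A: "A \<in> sets M" "measure N A = 0" using sets by (auto simp: measure_def)
  then have "measure M A = 0" using le[OF A(1)] measure_nonneg[of M A] by simp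
  with A(1) show "A \<in> null_sets M" by (simp add: null_sets_def emeasure_eq_measure)
qed

lemma measure_eq_if_sym_diff_null:
  "sym_diff A B \<in> null_sets M \<Longrightarrow> A \<in> sets M \<Longrightarrow> B \<in> sets M \<Longrightarrow> measure M A = measure M B"
  by (intro measure_eq_AE AE_I'[of "sym_diff A B"]) auto

lemma exists_set_measure_less:
  assumes "finite_measure \<rho>" "finite_measure \<mu>" and sets: "sets \<mu> = sets \<rho>"
    and ac: "absolutely_continuous \<rho> \<mu>"
  obtains E where "E \<in> sets \<rho>"
    "\<And>S. S \<in> sets \<rho> \<Longrightarrow> S \<subseteq> E \<Longrightarrow> measure \<rho> S > 0 \<Longrightarrow> measure \<mu> S < measure \<rho> S"
    "\<And>S. S \<in> sets \<rho> \<Longrightarrow> S \<inter> E = {} \<Longrightarrow> measure \<rho> S \<le> measure \<mu> S"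
proof -
  interpret \<rho>: finite_measure \<rho> by fact
  interpret \<mu>: finite_measure \<mu> by fact
  define f where "f = RN_deriv \<rho> \<mu>"
  have f[measurable]: "f \<in> borel_measurable \<rho>" unfolding f_def by simp
  have \<mu>_eq: "emeasure \<mu> S = (\<integral>\<^sup>+x. f x * indicator S x \<partial>\<rho>)" if "S \<in> sets \<rho>" for S
    using that \<rho>.density_RN_deriv[OF ac sets] emeasure_density[OF f that] unfolding f_def by simp
  define E where "E = {x \<in> space \<rho>. f x < 1}"
  have E: "E \<in> sets \<rho>" unfolding E_def by measurable
  have "measure \<mu> S < measure \<rho> S"
    if S: "S \<in> sets \<rho>" "S \<subseteq> E" "measure \<rho> S > 0" for S
  proof -
    have "\<not> (AE x in \<rho>. indicator S x \<le> f x * indicator S x)"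
    proof
      assume "AE x in \<rho>. indicator S x \<le> f x * indicator S x"
      then have "AE x in \<rho>. x \<notin> S"
        by eventually_elim (use S(2) in \<open>auto simp: E_def indicator_def\<close>)
      then have "S \<in> null_sets \<rho>" using S(1) by (simp add: AE_iff_null_sets)
      then show False using S(3) by (simp add: measure_def null_setsD1)
    qed
    moreover have "AE x in \<rho>. f x * indicator S x \<le> indicator S x"
      using S(2) by (intro AE_I2) (auto simp: E_def indicator_def less_imp_le)
    ultimately have "(\<integral>\<^sup>+x. f x * indicator S x \<partial>\<rho>) < (\<integral>\<^sup>+x. indicator S x \<partial>\<rho>)"
      using S(1) \<mu>_eq[OF S(1)] by (intro nn_integral_less) auto
    then have "ennreal (measure \<mu> S) < ennreal (measure \<rho> S)"
      using S(1) \<mu>_eq[OF S(1)] sets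
      by (simp add: \<rho>.emeasure_eq_measure \<mu>.emeasure_eq_measure)
    then show ?thesis by (simp add: ennreal_less_iff)
  qed
  moreover have "measure \<rho> S \<le> measure \<mu> S" if S: "S \<in> sets \<rho>" "S \<inter> E = {}" for S
  proof -
    have "(\<integral>\<^sup>+x. indicator S x \<partial>\<rho>) \<le> (\<integral>\<^sup>+x. f x * indicator S x \<partial>\<rho>)"
      using S(2) by (intro nn_integral_mono) (auto simp: E_def indicator_def not_less)
    then have "ennreal (measure \<rho> S) \<le> ennreal (measure \<mu> S)"
      using S(1) \<mu>_eq[OF S(1)] sets
      by (simp add: \<rho>.emeasure_eq_measure \<mu>.emeasure_eq_measure)
    then show ?thesis by (simp add: ennreal_le_iff)
  qed
  ultimately show ?thesis using that E by blast
qed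

lemma (in prob_space) prob_space_uniform_measure_pos:
  "prob C > 0 \<Longrightarrow> prob_space (uniform_measure M C)"
  by (intro prob_space_uniform_measure) (auto simp: emeasure_eq_measure)

lemma (in prob_space) measure_uniform_measure_pos:
  "prob C > 0 \<Longrightarrow> B \<in> events \<Longrightarrow> measure (uniform_measure M C) B = prob (C \<inter> B) / prob C"
  by (intro measure_uniform_measure) (auto simp: emeasure_eq_measure)

lemma (in prob_space) measure_uniform_measure_le:
  assumes pos: "prob C > 0" and A: "A \<in> events"
  shows "measure (uniform_measure M C) A \<le> prob A + (1 - prob C)"
proof -
  have C: "C \<in> events" using pos measure_notin_sets by force
  let ?u = "measure (uniform_measure M C) A"
  have u: "?u = prob (C \<inter> A) / prob C" using pos A by (rule measure_uniform_measure_pos)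
  have "prob (C \<inter> A) \<le> prob C" "prob (C \<inter> A) \<le> prob A"
    using A C by (auto intro: finite_measure_mono)
  then have "?u \<le> 1" "?u * prob C \<le> prob A" using pos unfolding u by simp_all
  moreover have "?u * (1 - prob C) \<le> 1 - prob C"
    using \<open>?u \<le> 1\<close> prob_le_1[of C] u pos by (intro mult_left_le_one_le) auto
  ultimately show ?thesis by (simp add: algebra_simps)
qed

lemma exists_prob_of_additive_le_continuous:
  fixes R :: "'a set \<Rightarrow> real"
  assumes nonneg: "\<And>A. A \<in> sets M \<Longrightarrow> 0 \<le> R A"
    and additive: "\<And>A B. A \<in> sets M \<Longrightarrow> B \<in> sets M \<Longrightarrow> A \<inter> B = {} \<Longrightarrow> R (A \<union> B) = R A + R B"
    and space: "R (space M) = 1"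
    and le: "\<And>A. A \<in> sets M \<Longrightarrow> R A \<le> V A" and V: "continuous_capacity M V"
  obtains P where "prob_space P" "sets P = sets M" "\<And>A. A \<in> sets M \<Longrightarrow> measure P A = R A"
proof -
  define f where "f A = ennreal (R A)" for A
  have "R {} = 0" using additive[of "{}" "{}"] by simp
  then have pos: "positive (sets M) f" unfolding positive_def f_def by simp
  have "countably_additive (sets M) f"
  proof (rule sets.empty_continuous_imp_countably_additive[OF pos])
    show "additive (sets M) f"
      unfolding additive_def f_def using nonneg additive by (simp add: ennreal_plus)
    show "\<forall>A\<in>sets M. f A \<noteq> \<infinity>" unfolding f_def by simp
    fix A :: "nat \<Rightarrow> 'a set" assume A: "range A \<subseteq> sets M" "decseq A" "(\<Inter>i. A i) = {}"
    have V_lim: "(\<lambda>i. V (A i)) \<longlonglongrightarrow> 0"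
      using V A unfolding continuous_capacity_def by auto
    have "eventually (\<lambda>i. 0 \<le> R (A i)) sequentially"
      using A(1) nonneg by (simp add: range_subsetD)
    moreover have "eventually (\<lambda>i. R (A i) \<le> V (A i)) sequentially"
      using A(1) le by (simp add: range_subsetD)
    ultimately have "(\<lambda>i. R (A i)) \<longlonglongrightarrow> 0"
      using tendsto_const V_lim by (rule tendsto_sandwich)
    from tendsto_ennrealI[OF this] show "(\<lambda>i. f (A i)) \<longlonglongrightarrow> 0"
      unfolding f_def by simp
  qed
  then have em: "emeasure (measure_of (space M) (sets M) f) A = f A" if "A \<in> sets M" for A
    using that by (intro emeasure_measure_of_sigma pos sets.sigma_algebra_axioms)
  show ?thesis
  proof
    show "prob_space (measure_of (space M) (sets M) f)"
      by (rule prob_spaceI) (simp add: em f_def space)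
    show "measure (measure_of (space M) (sets M) f) A = R A" if "A \<in> sets M" for A
      using em[OF that] nonneg[OF that] by (simp add: measure_def f_def)
  qed simp
qed

lemma probs_onD: "P \<in> probs_on M \<Longrightarrow> prob_space P" "P \<in> probs_on M \<Longrightarrow> sets P = sets M"
  unfolding probs_on_def by auto

lemma measure_space_probs_on: "P \<in> probs_on M \<Longrightarrow> measure P (space M) = 1"
  using prob_space.prob_space sets_eq_imp_space_eq by (metis probs_onD)

lemma core_probs_on: "P \<in> core M V \<Longrightarrow> P \<in> probs_on M"
  unfolding core_def by blast

lemma measure_le_V: "P \<in> core M V \<Longrightarrow> A \<in> sets M \<Longrightarrow> measure P A \<le> V A"
  unfolding core_def by blast

lemma measure_eq_0_if_V_eq_0: "P \<in> core M V \<Longrightarrow> A \<in> sets M \<Longrightarrow> V A = 0 \<Longrightarrow> measure P A = 0"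
  using measure_le_V measure_nonneg by (metis order_antisym)

lemma ergodic_prob_invariant: "ergodic_prob M T P \<Longrightarrow> invariant_prob M T P"
  unfolding ergodic_prob_def by blast

lemma ergodic_probD:
  "ergodic_prob M T P \<Longrightarrow> A \<in> invariant_sets M T \<Longrightarrow> measure P A = 0 \<or> measure P A = 1"
  unfolding ergodic_prob_def T_ergodic_fun_def by blast

lemma prob_convex_hull_subset_core:
  "S \<subseteq> core M V \<Longrightarrow> prob_convex_hull M S \<subseteq> core M V"
proof
  fix P assume S: "S \<subseteq> core M V" and "P \<in> prob_convex_hull M S"
  then obtain F c where P: "P \<in> probs_on M" and F: "F \<subseteq> S" "\<forall>Q\<in>F. 0 \<le> c Q" "(\<Sum>Q\<in>F. c Q) = 1"
    and comb: "\<forall>A\<in>sets M. measure P A = (\<Sum>Q\<in>F. c Q * measure Q A)"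
    unfolding prob_convex_hull_def by blast
  have "measure P A \<le> V A" if A: "A \<in> sets M" for A
  proof -
    have "measure P A \<le> (\<Sum>Q\<in>F. c Q * V A)"
      unfolding comb[rule_format, OF A] using F S A
      by (intro sum_mono mult_left_mono) (auto simp: core_def)
    also have "\<dots> = V A" using F(3) by (simp add: sum_distrib_right[symmetric])
    finally show ?thesis .
  qed
  with P show "P \<in> core M V" unfolding core_def by blast
qed

section \<open>Invariant sets and invariant probabilities\<close>

locale measurable_endomap =
  fixes M :: "'a measure" and T :: "'a \<Rightarrow> 'a"
  assumes T_measurable: "T \<in> measurable M M"
begin

definition pre :: "'a set \<Rightarrow> 'a set" where
  "pre A = T -` A \<inter> space M"

abbreviation Inv :: "'a set set" where
  "Inv \<equiv> invariant_sets M T"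

lemma sets_pre: "A \<in> sets M \<Longrightarrow> pre A \<in> sets M"
  unfolding pre_def using T_measurable by (rule measurable_sets)

lemma sets_pre_funpow: "A \<in> sets M \<Longrightarrow> (pre ^^ n) A \<in> sets M"
  by (induction n) (auto intro: sets_pre)

lemma pre_space: "pre (space M) = space M"
  using T_measurable by (auto simp: pre_def measurable_def)

lemma pre_Diff: "pre (A - B) = pre A - pre B"
  by (auto simp: pre_def)

lemma pre_Int: "pre (A \<inter> B) = pre A \<inter> pre B"
  by (auto simp: pre_def)

lemma pre_funpow_Diff: "(pre ^^ n) (A - B) = (pre ^^ n) A - (pre ^^ n) B"
  by (induction n) (auto simp: pre_def)

lemma pre_funpow_Un: "(pre ^^ n) (A \<union> B) = (pre ^^ n) A \<union> (pre ^^ n) B"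
  by (induction n) (auto simp: pre_def)

lemma pre_funpow_Int: "(pre ^^ n) (A \<inter> B) = (pre ^^ n) A \<inter> (pre ^^ n) B"
  by (induction n) (auto simp: pre_def)

lemma invariant_sets_iff: "A \<in> Inv \<longleftrightarrow> A \<in> sets M \<and> pre A = A"
  unfolding invariant_sets_def pre_def by auto

lemma invariant_sets_sets: "A \<in> Inv \<Longrightarrow> A \<in> sets M"
  by (simp add: invariant_sets_iff)

lemma pre_funpow_invariant: "A \<in> Inv \<Longrightarrow> (pre ^^ n) A = A"
  by (induction n) (auto simp: invariant_sets_iff)

lemma invariant_sets_space: "space M \<in> Inv"
  by (simp add: invariant_sets_iff pre_space)

lemma invariant_sets_Diff: "A \<in> Inv \<Longrightarrow> B \<in> Inv \<Longrightarrow> A - B \<in> Inv"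
  by (auto simp: invariant_sets_iff pre_Diff)

lemma invariant_sets_Int: "A \<in> Inv \<Longrightarrow> B \<in> Inv \<Longrightarrow> A \<inter> B \<in> Inv"
  by (auto simp: invariant_sets_iff pre_Int)

lemma invariant_sets_UN:
  assumes "countable I" "\<And>i. i \<in> I \<Longrightarrow> A i \<in> Inv"
  shows "(\<Union>i\<in>I. A i) \<in> Inv"
proof -
  have "(\<Union>i\<in>I. A i) \<in> sets M"
    using assms by (intro sets.countable_UN'') (auto simp: invariant_sets_iff)
  moreover have "pre (\<Union>i\<in>I. A i) = (\<Union>i\<in>I. pre (A i))" by (auto simp: pre_def)
  ultimately show ?thesis using assms(2) by (simp add: invariant_sets_iff)
qed

lemma invariant_probI:
  "P \<in> probs_on M \<Longrightarrow> (\<And>A. A \<in> sets M \<Longrightarrow> measure P (pre A) = measure P A) \<Longrightarrow> invariant_prob M T P"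
  unfolding invariant_prob_def T_invariant_fun_def pre_def by blast

lemma invariant_prob_probs_on: "invariant_prob M T P \<Longrightarrow> P \<in> probs_on M"
  unfolding invariant_prob_def by blast

lemma measure_pre:
  "invariant_prob M T P \<Longrightarrow> A \<in> sets M \<Longrightarrow> measure P (pre A) = measure P A"
  unfolding invariant_prob_def T_invariant_fun_def pre_def by blast

lemma measure_pre_funpow:
  "invariant_prob M T P \<Longrightarrow> A \<in> sets M \<Longrightarrow> measure P ((pre ^^ n) A) = measure P A"
  by (induction n) (auto simp: measure_pre sets_pre_funpow)

lemma null_sets_pre_funpow:
  assumes P: "invariant_prob M T P" and A: "A \<in> null_sets P"
  shows "(pre ^^ n) A \<in> null_sets P"
proof -
  interpret prob_space P using P by (auto dest: invariant_prob_probs_on probs_onD)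
  have sets: "sets P = sets M" using P by (auto dest: invariant_prob_probs_on probs_onD)
  then have "A \<in> sets M" "measure P A = 0" using A by (auto simp: measure_def)
  then show ?thesis
    using measure_pre_funpow[OF P] sets_pre_funpow sets by (simp add: null_sets_def emeasure_eq_measure)
qed

lemma measure_Diff_pre:
  assumes P: "invariant_prob M T P" and E: "E \<in> sets M"
  shows "measure P (E - pre E) = measure P (pre E - E)"
proof -
  interpret prob_space P using P by (auto dest: invariant_prob_probs_on probs_onD)
  have sets: "sets P = sets M" using P by (auto dest: invariant_prob_probs_on probs_onD)
  then show ?thesis
    using measure_pre[OF P E] finite_measure_Diff'[of E "pre E"] finite_measure_Diff'[of "pre E" E] E sets_pre
    by (simp add: Int_commute)
qed

lemma exists_invariant_set_AE_eq:
  assumes P: "invariant_prob M T P" and E: "E \<in> sets M"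
    and null: "sym_diff E (pre E) \<in> null_sets P"
  obtains E' where "E' \<in> Inv" "sym_diff E E' \<in> null_sets P"
proof
  define A where "A n = (pre ^^ n) E" for n
  define U where "U k = (\<Union>n. A (n + k))" for k
  define E' where "E' = (\<Inter>k. U k)"
  have sets_P: "sets P = sets M" using P by (auto dest: invariant_prob_probs_on probs_onD)
  have "U k \<in> sets M" for k unfolding U_def A_def using E by (auto intro: sets_pre_funpow)
  then have E': "E' \<in> sets M" unfolding E'_def by auto
  have "U (Suc k) \<subseteq> U k" for k
    unfolding U_def
  proof (rule UN_least)
    fix n show "A (n + Suc k) \<subseteq> (\<Union>n. A (n + k))"
      using UN_upper[of "Suc n" UNIV "\<lambda>n. A (n + k)"] by simp
  qed
  then have "(\<Inter>k. U (Suc k)) = E'" unfolding E'_def by blast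
  moreover have "pre E' = (\<Inter>k. U (Suc k))"
  proof -
    have "pre E' = (\<Inter>k. \<Union>n. pre (A (n + k)))" unfolding E'_def U_def pre_def by blast
    then show ?thesis by (simp add: U_def A_def)
  qed
  ultimately show "E' \<in> Inv" using E' by (simp add: invariant_sets_iff)
  have D: "(pre ^^ j) (sym_diff E (pre E)) = sym_diff (A j) (A (Suc j))" for j
    unfolding A_def pre_funpow_Un pre_funpow_Diff by (simp add: funpow_Suc_right del: funpow.simps)
  have "sym_diff E E' \<subseteq> (\<Union>j. (pre ^^ j) (sym_diff E (pre E)))" (is "_ \<subseteq> ?N")
  proof
    fix x assume "x \<in> sym_diff E E'"
    then obtain k where "(x \<in> A 0) \<noteq> (x \<in> A k)"
      unfolding E'_def U_def by (auto simp: A_def)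
    then obtain j where "(x \<in> A j) \<noteq> (x \<in> A (Suc j))"
      using exists_membership_change[of x A k] by blast
    then have "x \<in> (pre ^^ j) (sym_diff E (pre E))"
      unfolding D by auto
    then show "x \<in> ?N" by blast
  qed
  moreover have "?N \<in> null_sets P"
    by (rule null_sets_UN) (rule null_sets_pre_funpow[OF P null])
  moreover have "sym_diff E E' \<in> sets P"
    using E E' sets_P by simp
  ultimately show "sym_diff E E' \<in> null_sets P"
    by (blast intro: null_sets_subset)
qed

lemma exists_invariant_midpoint:
  assumes \<mu>: "invariant_prob M T \<mu>" and \<nu>: "invariant_prob M T \<nu>"
  obtains \<rho> where "invariant_prob M T \<rho>"
    "\<And>A. A \<in> sets M \<Longrightarrow> measure \<rho> A = (measure \<mu> A + measure \<nu> A) / 2"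
proof -
  have sets_\<mu>: "sets \<mu> = sets M" and sets_\<nu>: "sets \<nu> = sets M"
    using \<mu> \<nu> by (auto dest: invariant_prob_probs_on probs_onD)
  have "prob_space \<mu>" "prob_space \<nu>" using \<mu> \<nu> by (auto dest: invariant_prob_probs_on probs_onD)
  moreover have "sets \<nu> = sets \<mu>" using sets_\<mu> sets_\<nu> by simp
  ultimately obtain \<rho> where \<rho>: "prob_space \<rho>" "sets \<rho> = sets \<mu>"
    and \<rho>_eq: "\<And>A. A \<in> sets \<mu> \<Longrightarrow> measure \<rho> A = (measure \<mu> A + measure \<nu> A) / 2"
    by (rule exists_midpoint_prob) blast
  have "invariant_prob M T \<rho>"
  proof (rule invariant_probI)
    show "\<rho> \<in> probs_on M" unfolding probs_on_def using \<rho> sets_\<mu> by simp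
    fix A assume "A \<in> sets M"
    then show "measure \<rho> (pre A) = measure \<rho> A"
      using \<rho>_eq[of A] \<rho>_eq[of "pre A"] sets_\<mu> sets_pre measure_pre[OF \<mu>] measure_pre[OF \<nu>]
      by simp
  qed
  moreover have "measure \<rho> A = (measure \<mu> A + measure \<nu> A) / 2" if "A \<in> sets M" for A
    using \<rho>_eq that sets_\<mu> by simp
  ultimately show ?thesis by (rule that)
qed

lemma exists_AE_invariant_set_measure_less:
  assumes \<rho>: "invariant_prob M T \<rho>" and \<mu>: "invariant_prob M T \<mu>"
    and ac: "null_sets \<rho> \<subseteq> null_sets \<mu>"
  obtains E where "E \<in> sets M" "sym_diff E (pre E) \<in> null_sets \<rho>"
    "\<And>S. S \<in> sets M \<Longrightarrow> S \<subseteq> E \<Longrightarrow> measure \<rho> S > 0 \<Longrightarrow> measure \<mu> S < measure \<rho> S"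
    "\<And>S. S \<in> sets M \<Longrightarrow> S \<inter> E = {} \<Longrightarrow> measure \<rho> S \<le> measure \<mu> S"
proof -
  have sets_\<rho>: "sets \<rho> = sets M" and sets_\<mu>: "sets \<mu> = sets M"
    using \<rho> \<mu> by (auto dest: invariant_prob_probs_on probs_onD)
  interpret \<rho>: prob_space \<rho> using \<rho> by (auto dest: invariant_prob_probs_on probs_onD)
  interpret \<mu>: prob_space \<mu> using \<mu> by (auto dest: invariant_prob_probs_on probs_onD)
  have "sets \<mu> = sets \<rho>" "absolutely_continuous \<rho> \<mu>"
    using sets_\<rho> sets_\<mu> ac unfolding absolutely_continuous_def by simp_all
  then obtain E where E: "E \<in> sets \<rho>"
    and less: "\<And>S. S \<in> sets \<rho> \<Longrightarrow> S \<subseteq> E \<Longrightarrow> measure \<rho> S > 0 \<Longrightarrow> measure \<mu> S < measure \<rho> S"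
    and ge: "\<And>S. S \<in> sets \<rho> \<Longrightarrow> S \<inter> E = {} \<Longrightarrow> measure \<rho> S \<le> measure \<mu> S"
    using exists_set_measure_less[OF \<rho>.finite_measure_axioms \<mu>.finite_measure_axioms] by blast
  note E = E[unfolded sets_\<rho>] and less = less[unfolded sets_\<rho>] and ge = ge[unfolded sets_\<rho>]
  \<comment> \<open>\<open>E - pre E\<close> and \<open>pre E - E\<close> have equal \<open>\<mu>\<close>- and equal \<open>\<rho>\<close>-measure by invariance,
    but \<open>\<mu> < \<rho>\<close> on the first unless it is null, and \<open>\<rho> \<le> \<mu>\<close> on the second.\<close>
  have "measure \<rho> (E - pre E) = 0"
  proof (rule ccontr)
    assume "measure \<rho> (E - pre E) \<noteq> 0"
    then have "measure \<mu> (E - pre E) < measure \<rho> (E - pre E)"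
      using E sets_pre by (intro less) (auto simp: zero_less_measure_iff)
    also have "\<dots> = measure \<rho> (pre E - E)" using measure_Diff_pre[OF \<rho> E] .
    also have "\<dots> \<le> measure \<mu> (pre E - E)" using E sets_pre by (intro ge) auto
    finally show False using measure_Diff_pre[OF \<mu> E] by simp
  qed
  then have "E - pre E \<in> null_sets \<rho>" "pre E - E \<in> null_sets \<rho>"
    using measure_Diff_pre[OF \<rho> E] E sets_pre sets_\<rho> by (auto simp: null_sets_def \<rho>.emeasure_eq_measure)
  then have "sym_diff E (pre E) \<in> null_sets \<rho>" by (rule null_sets.Un)
  with E less ge show ?thesis using that by blast
qed

lemma invariant_probs_eq:
  assumes \<mu>: "invariant_prob M T \<mu>" and \<nu>: "invariant_prob M T \<nu>"
    and eq: "\<And>A. A \<in> Inv \<Longrightarrow> measure \<mu> A = measure \<nu> A"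
  shows "\<mu> = \<nu>"
proof -
  \<comment> \<open>With \<open>\<rho>\<close> the midpoint of \<open>\<mu>\<close> and \<open>\<nu>\<close>, the set \<open>E\<close> where \<open>\<mu>\<close> lies strictly below \<open>\<rho>\<close> is
    invariant up to a null set, so \<open>\<mu> E = \<nu> E = \<rho> E\<close>; this forces \<open>\<rho> E = 0\<close>, and then
    \<open>\<nu> \<le> \<mu>\<close> everywhere.\<close>
  have sets_\<mu>: "sets \<mu> = sets M" and sets_\<nu>: "sets \<nu> = sets M"
    using \<mu> \<nu> by (auto dest: invariant_prob_probs_on probs_onD)
  interpret \<mu>: prob_space \<mu> using \<mu> by (auto dest: invariant_prob_probs_on probs_onD)
  interpret \<nu>: prob_space \<nu> using \<nu> by (auto dest: invariant_prob_probs_on probs_onD)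
  obtain \<rho> where \<rho>: "invariant_prob M T \<rho>"
    and \<rho>_eq: "\<And>A. A \<in> sets M \<Longrightarrow> measure \<rho> A = (measure \<mu> A + measure \<nu> A) / 2"
    using exists_invariant_midpoint[OF \<mu> \<nu>] by blast
  have sets_\<rho>: "sets \<rho> = sets M" using \<rho> by (auto dest: invariant_prob_probs_on probs_onD)
  interpret \<rho>: prob_space \<rho> using \<rho> by (auto dest: invariant_prob_probs_on probs_onD)
  have "measure \<mu> A \<le> 2 * measure \<rho> A" if "A \<in> sets \<mu>" for A
    using \<rho>_eq[of A] that sets_\<mu> measure_nonneg[of \<nu> A] by (simp del: measure_nonneg)
  then have null_\<mu>: "null_sets \<rho> \<subseteq> null_sets \<mu>"
    using sets_\<rho> sets_\<mu> by (intro \<mu>.null_sets_subset_if_measure_le) auto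
  have "measure \<nu> A \<le> 2 * measure \<rho> A" if "A \<in> sets \<nu>" for A
    using \<rho>_eq[of A] that sets_\<nu> measure_nonneg[of \<mu> A] by (simp del: measure_nonneg)
  then have null_\<nu>: "null_sets \<rho> \<subseteq> null_sets \<nu>"
    using sets_\<rho> sets_\<nu> by (intro \<nu>.null_sets_subset_if_measure_le) auto
  obtain E where E: "E \<in> sets M" "sym_diff E (pre E) \<in> null_sets \<rho>"
    and less: "\<And>S. S \<in> sets M \<Longrightarrow> S \<subseteq> E \<Longrightarrow> measure \<rho> S > 0 \<Longrightarrow> measure \<mu> S < measure \<rho> S"
    and ge: "\<And>S. S \<in> sets M \<Longrightarrow> S \<inter> E = {} \<Longrightarrow> measure \<rho> S \<le> measure \<mu> S"
    using exists_AE_invariant_set_measure_less[OF \<rho> \<mu> null_\<mu>] by blast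
  obtain E' where E': "E' \<in> Inv" and "sym_diff E E' \<in> null_sets \<rho>"
    using exists_invariant_set_AE_eq[OF \<rho> E] by blast
  then have "measure \<mu> E = measure \<mu> E'" "measure \<nu> E = measure \<nu> E'"
    using null_\<mu> null_\<nu> E(1) invariant_sets_sets sets_\<mu> sets_\<nu>
    by (auto intro!: measure_eq_if_sym_diff_null)
  then have "measure \<rho> E = measure \<mu> E" using eq[OF E'] \<rho>_eq[OF E(1)] by simp
  then have "measure \<rho> E = 0"
    using less[OF E(1) subset_refl] by (metis less_irrefl zero_less_measure_iff)
  then have E_null: "E \<in> null_sets \<rho>" using E(1) sets_\<rho> by (simp add: null_sets_def \<rho>.emeasure_eq_measure)
  have "measure \<nu> A \<le> measure \<mu> A" if A: "A \<in> sets \<mu>" for A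
  proof -
    have "measure \<rho> A = measure \<rho> (A - E)" using A E_null sets_\<rho> sets_\<mu> by (simp add: measure_Diff_null_set)
    also have "\<dots> \<le> measure \<mu> (A - E)" using A E sets_\<mu> by (intro ge) auto
    also have "\<dots> \<le> measure \<mu> A" using A E sets_\<mu> by (intro \<mu>.finite_measure_mono) auto
    finally show ?thesis using \<rho>_eq[of A] A sets_\<mu> by simp
  qed
  with sets_\<mu> sets_\<nu> have "\<nu> = \<mu>"
    by (intro prob_space_eq_if_measure_le \<mu>.prob_space_axioms \<nu>.prob_space_axioms) auto
  then show "\<mu> = \<nu>" ..
qed

lemma invariant_prob_uniform_measure:
  assumes P: "invariant_prob M T P" and C: "C \<in> Inv" and pos: "measure P C > 0"
  shows "invariant_prob M T (uniform_measure P C)"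
proof (rule invariant_probI)
  interpret prob_space P using P by (auto dest: invariant_prob_probs_on probs_onD)
  have sets: "sets P = sets M" using P by (auto dest: invariant_prob_probs_on probs_onD)
  show "uniform_measure P C \<in> probs_on M"
    unfolding probs_on_def using prob_space_uniform_measure_pos[OF pos] sets by simp
  fix A assume A: "A \<in> sets M"
  have "C \<inter> pre A = pre (C \<inter> A)" using C by (simp add: invariant_sets_iff pre_Int)
  then show "measure (uniform_measure P C) (pre A) = measure (uniform_measure P C) A"
    using measure_uniform_measure_pos[OF pos] A sets sets_pre measure_pre[OF P] C invariant_sets_sets
    by simp
qed

lemma prob_convex_hull_invariant:
  assumes S: "\<And>Q. Q \<in> S \<Longrightarrow> invariant_prob M T Q" and "P \<in> prob_convex_hull M S"
  shows "invariant_prob M T P"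
proof -
  obtain F c where P: "P \<in> probs_on M" and F: "F \<subseteq> S"
    and comb: "\<And>A. A \<in> sets M \<Longrightarrow> measure P A = (\<Sum>Q\<in>F. c Q * measure Q A)"
    using assms(2) unfolding prob_convex_hull_def by blast
  show ?thesis
  proof (rule invariant_probI[OF P])
    fix A assume A: "A \<in> sets M"
    have "measure P (pre A) = (\<Sum>Q\<in>F. c Q * measure Q (pre A))" using comb sets_pre[OF A] .
    also have "\<dots> = (\<Sum>Q\<in>F. c Q * measure Q A)"
      using F S measure_pre A by (intro sum.cong) auto
    finally show "measure P (pre A) = measure P A" using comb[OF A] by simp
  qed
qed

lemma T_invariant_fun_pre_funpow:
  "T_invariant_fun M T V \<Longrightarrow> A \<in> sets M \<Longrightarrow> V ((pre ^^ n) A) = V A"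
  by (induction n) (auto simp: T_invariant_fun_def pre_def[symmetric] sets_pre_funpow)

definition cesaro_mean :: "'a measure \<Rightarrow> nat \<Rightarrow> 'a set \<Rightarrow> real" where
  "cesaro_mean Q n A = (\<Sum>k<Suc n. measure Q ((pre ^^ k) A)) / real (Suc n)"

lemma cesaro_mean_bounds: "prob_space Q \<Longrightarrow> cesaro_mean Q n A \<in> {0..1}"
proof -
  assume "prob_space Q"
  then have "(\<Sum>k<Suc n. measure Q ((pre ^^ k) A)) \<le> (\<Sum>k<Suc n. 1)"
    by (intro sum_mono) (simp add: prob_space.prob_le_1)
  then show ?thesis unfolding cesaro_mean_def by (auto simp: divide_le_eq sum_nonneg)
qed

lemma cesaro_mean_le:
  assumes V: "T_invariant_fun M T V" and QV: "\<And>A. A \<in> sets M \<Longrightarrow> measure Q A \<le> V A"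
    and A: "A \<in> sets M"
  shows "cesaro_mean Q n A \<le> V A"
proof -
  have "(\<Sum>k<Suc n. measure Q ((pre ^^ k) A)) \<le> (\<Sum>k<Suc n. V A)"
    using QV sets_pre_funpow[OF A] T_invariant_fun_pre_funpow[OF V A] by (intro sum_mono) metis
  then show ?thesis unfolding cesaro_mean_def by (simp add: divide_le_eq mult.commute)
qed

lemma cesaro_mean_Un:
  assumes Q: "Q \<in> probs_on M" and "A \<in> sets M" "B \<in> sets M" "A \<inter> B = {}"
  shows "cesaro_mean Q n (A \<union> B) = cesaro_mean Q n A + cesaro_mean Q n B"
proof -
  interpret prob_space Q using Q by (rule probs_onD)
  have "(pre ^^ k) {} = {}" for k by (induction k) (auto simp: pre_def)
  then have "(pre ^^ k) A \<inter> (pre ^^ k) B = {}" for k using assms(4) pre_funpow_Int[of k A B] by simp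
  then have "measure Q ((pre ^^ k) (A \<union> B)) = measure Q ((pre ^^ k) A) + measure Q ((pre ^^ k) B)" for k
    using assms(2,3) sets_pre_funpow probs_onD(2)[OF Q] unfolding pre_funpow_Un
    by (intro finite_measure_Union) auto
  then show ?thesis unfolding cesaro_mean_def by (simp add: sum.distrib add_divide_distrib)
qed

lemma cesaro_mean_space: "Q \<in> probs_on M \<Longrightarrow> cesaro_mean Q n (space M) = 1"
proof -
  have "(pre ^^ k) (space M) = space M" for k by (induction k) (simp_all add: pre_space)
  then show "Q \<in> probs_on M \<Longrightarrow> cesaro_mean Q n (space M) = 1"
    unfolding cesaro_mean_def by (simp add: measure_space_probs_on)
qed

lemma cesaro_mean_invariant: "A \<in> Inv \<Longrightarrow> cesaro_mean Q n A = measure Q A"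
  unfolding cesaro_mean_def by (simp add: pre_funpow_invariant)

lemma cesaro_mean_pre_tendsto:
  assumes "prob_space Q"
  shows "(\<lambda>n. cesaro_mean Q n (pre A) - cesaro_mean Q n A) \<longlonglongrightarrow> 0"
proof -
  interpret prob_space Q by fact
  have telescope: "cesaro_mean Q n (pre A) - cesaro_mean Q n A
      = (measure Q ((pre ^^ Suc n) A) - measure Q A) / real (Suc n)" for n
  proof -
    have "(\<Sum>k<Suc n. measure Q ((pre ^^ k) (pre A))) - (\<Sum>k<Suc n. measure Q ((pre ^^ k) A))
        = (\<Sum>k<Suc n. measure Q ((pre ^^ Suc k) A) - measure Q ((pre ^^ k) A))"
      by (simp add: sum_subtractf funpow_Suc_right del: funpow.simps)
    also have "\<dots> = measure Q ((pre ^^ Suc n) A) - measure Q A"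
      by (subst sum_lessThan_telescope) simp
    finally show ?thesis unfolding cesaro_mean_def diff_divide_distrib[symmetric] by simp
  qed
  have "\<bar>measure Q ((pre ^^ Suc n) A) - measure Q A\<bar> \<le> 1" for n
    using prob_le_1 measure_nonneg by (smt (verit))
  then have "\<forall>n. norm (cesaro_mean Q n (pre A) - cesaro_mean Q n A) \<le> 1 / real (Suc n)"
    unfolding telescope by (simp add: divide_right_mono)
  moreover have "(\<lambda>n. 1 / real (Suc n)) \<longlonglongrightarrow> 0"
    using LIMSEQ_inverse_real_of_nat by (simp add: inverse_eq_divide)
  ultimately show ?thesis by (rule Lim_null_comparison[OF always_eventually])
qed

lemma exists_invariant_prob_le:
  assumes Q: "Q \<in> probs_on M" and QV: "\<And>A. A \<in> sets M \<Longrightarrow> measure Q A \<le> V A"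
    and V: "T_invariant_fun M T V" "continuous_capacity M V"
  obtains R where "invariant_prob M T R" "\<And>A. A \<in> sets M \<Longrightarrow> measure R A \<le> V A"
    "\<And>A. A \<in> Inv \<Longrightarrow> measure R A = measure Q A"
proof -
  obtain F L where F: "F \<noteq> bot" "F \<le> sequentially"
    and lim: "\<And>A. ((\<lambda>n. cesaro_mean Q n A) \<longlongrightarrow> L A) F"
    using exists_cluster_filter[of "cesaro_mean Q", OF cesaro_mean_bounds[OF probs_onD(1)[OF Q]]] by blast
  have F': "\<not> trivial_limit F" using F(1) by (simp add: trivial_limit_def)
  have L_le: "L A \<le> V A" if "A \<in> sets M" for A
    using F' cesaro_mean_le[OF V(1) QV that] by (intro tendsto_upperbound[OF lim] always_eventually) auto
  have L_nonneg: "0 \<le> L A" if "A \<in> sets M" for A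
    using F' cesaro_mean_bounds[OF probs_onD(1)[OF Q]] by (intro tendsto_lowerbound[OF lim] always_eventually) auto
  have L_Un: "L (A \<union> B) = L A + L B" if "A \<in> sets M" "B \<in> sets M" "A \<inter> B = {}" for A B
  proof -
    have "((\<lambda>n. cesaro_mean Q n (A \<union> B)) \<longlongrightarrow> L A + L B) F"
      using tendsto_add[OF lim[of A] lim[of B]] by (simp add: cesaro_mean_Un[OF Q that])
    with lim show ?thesis using F' by (rule tendsto_unique[rotated])
  qed
  have L_space: "L (space M) = 1"
    using lim[of "space M"] F' by (simp add: cesaro_mean_space[OF Q] tendsto_const_iff)
  have L_invariant: "L A = measure Q A" if "A \<in> Inv" for A
    using lim[of A] F' by (simp add: cesaro_mean_invariant[OF that] tendsto_const_iff)
  have L_pre: "L (pre A) = L A" for A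
  proof -
    have "((\<lambda>n. cesaro_mean Q n (pre A) - cesaro_mean Q n A) \<longlongrightarrow> 0) F"
      using F(2) cesaro_mean_pre_tendsto[OF probs_onD(1)[OF Q]] by (rule tendsto_mono)
    with tendsto_diff[OF lim[of "pre A"] lim[of A]] have "L (pre A) - L A = 0"
      using F' by (rule tendsto_unique[rotated])
    then show ?thesis by simp
  qed
  obtain R where R: "prob_space R" "sets R = sets M" "\<And>A. A \<in> sets M \<Longrightarrow> measure R A = L A"
    using exists_prob_of_additive_le_continuous[OF L_nonneg L_Un L_space L_le V(2)] by blast
  have "invariant_prob M T R"
    using R L_pre sets_pre by (intro invariant_probI) (auto simp: probs_on_def)
  then show ?thesis
    using that R L_le L_invariant invariant_sets_sets by auto
qed

end

section \<open>Upper probabilities\<close>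

locale upper_prob =
  fixes M :: "'a measure" and V :: "'a set \<Rightarrow> real"
  assumes upper_probability: "upper_probability M V"
begin

lemma core_nonempty: "core M V \<noteq> {}"
  using upper_probability unfolding upper_probability_def by blast

lemma V_eq_SUP: "A \<in> sets M \<Longrightarrow> V A = (SUP P\<in>core M V. measure P A)"
  using upper_probability unfolding upper_probability_def by blast

lemma bdd_above_core: "bdd_above ((\<lambda>P. measure P A) ` core M V)"
  by (rule bdd_aboveI[of _ 1])
    (auto dest!: core_probs_on probs_onD(1) intro: prob_space.prob_le_1)

lemma V_nonneg:
  assumes "A \<in> sets M"
  shows "0 \<le> V A"
proof -
  obtain P where "P \<in> core M V" using core_nonempty by blast
  then show ?thesis using measure_le_V[of P M V A] assms measure_nonneg[of P A] by linarith
qed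

lemma V_empty: "V {} = 0"
  using V_eq_SUP[of "{}"] core_nonempty by simp

lemma V_mono:
  assumes "A \<in> sets M" "B \<in> sets M" "A \<subseteq> B"
  shows "V A \<le> V B"
  unfolding V_eq_SUP[OF assms(1)] V_eq_SUP[OF assms(2)]
proof (rule cSUP_mono[OF core_nonempty bdd_above_core])
  fix P assume P: "P \<in> core M V"
  then interpret prob_space P by (auto dest!: core_probs_on probs_onD(1))
  have "measure P A \<le> measure P B"
    using assms P by (intro finite_measure_mono) (auto dest!: core_probs_on probs_onD(2))
  with P show "\<exists>Q\<in>core M V. measure P A \<le> measure Q B" by blast
qed

lemma exists_core_measure_gt:
  assumes "A \<in> sets M" "e > 0"
  obtains Q where "Q \<in> core M V" "V A - e < measure Q A"
proof -
  have "V A - e < (SUP P\<in>core M V. measure P A)" using V_eq_SUP[OF assms(1)] assms(2) by simp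
  then show ?thesis using less_cSUP_iff[OF core_nonempty bdd_above_core] that by blast
qed

lemma V_disjoint_family_tendsto_0:
  assumes V: "continuous_capacity M V" and X: "\<And>n. X n \<in> sets M" "disjoint_family X"
  shows "(\<lambda>n. V (X n)) \<longlonglongrightarrow> 0"
proof -
  define B where "B n = (\<Union>k\<in>{n..}. X k)" for n
  have B: "B n \<in> sets M" for n
    unfolding B_def by (rule sets.countable_UN'') (simp_all add: X(1))
  have dec: "decseq B" unfolding B_def by (rule decseq_SucI, rule UN_mono) auto
  have empty: "(\<Inter>n. B n) = {}"
  proof (rule equals0I)
    fix x assume x: "x \<in> (\<Inter>n. B n)"
    then obtain k where k: "x \<in> X k" unfolding B_def by blast
    from x have "x \<in> B (Suc k)" by blast
    then obtain j where "k < j" "x \<in> X j" unfolding B_def by (auto simp: Suc_le_eq)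
    moreover have "X j \<inter> X k = {}" using X(2) \<open>k < j\<close> unfolding disjoint_family_on_def by simp
    ultimately show False using k by blast
  qed
  have lim: "(\<lambda>n. V (B n)) \<longlonglongrightarrow> 0"
    using V[unfolded continuous_capacity_def, rule_format, OF B dec empty] .
  have "eventually (\<lambda>n. 0 \<le> V (X n)) sequentially"
    using X(1) by (simp add: V_nonneg)
  moreover have "eventually (\<lambda>n. V (X n) \<le> V (B n)) sequentially"
    using X(1) B by (intro always_eventually allI V_mono) (auto simp: B_def)
  ultimately show ?thesis using tendsto_const lim by (rule tendsto_sandwich)
qed

lemma not_disjoint_family_V_eq_1:
  fixes X :: "nat \<Rightarrow> 'a set"
  assumes "continuous_capacity M V" "\<And>n. X n \<in> sets M" "\<And>n. V (X n) = 1"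
  shows "\<not> disjoint_family X"
proof
  assume "disjoint_family X"
  with assms(1,2) have "(\<lambda>n. V (X n)) \<longlonglongrightarrow> 0" by (rule V_disjoint_family_tendsto_0)
  then show False using assms(3) by (simp add: LIMSEQ_const_iff)
qed

end

section \<open>Atoms and the ergodic decomposition\<close>

locale ergodic_upper_prob = upper_prob M V + measurable_endomap M T
  for M :: "'a measure" and V :: "'a set \<Rightarrow> real" and T :: "'a \<Rightarrow> 'a" +
  assumes continuous: "continuous_capacity M V"
    and V_invariant: "T_invariant_fun M T V"
    and V_ergodic: "T_ergodic_fun M T V"
begin

lemma V_invariant_set: "A \<in> Inv \<Longrightarrow> V A = 0 \<or> V A = 1"
  using V_ergodic unfolding T_ergodic_fun_def by blast

definition atom :: "'a set \<Rightarrow> bool" where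
  "atom C \<longleftrightarrow> C \<in> Inv \<and> V C = 1 \<and> (\<forall>S\<in>Inv. S \<subseteq> C \<longrightarrow> V S = 0 \<or> V (C - S) = 0)"

lemma atom_invariant: "atom C \<Longrightarrow> C \<in> Inv"
  unfolding atom_def by blast

lemma atom_sets: "atom C \<Longrightarrow> C \<in> sets M"
  by (simp add: atom_invariant invariant_sets_sets)

lemma V_atom: "atom C \<Longrightarrow> V C = 1"
  unfolding atom_def by blast

lemma exists_atom_subset:
  assumes A: "A \<in> Inv" "V A = 1"
  obtains C where "atom C" "C \<subseteq> A"
proof -
  have "\<exists>C. atom C \<and> C \<subseteq> A"
  proof (rule ccontr)
    assume no_atom: "\<nexists>C. atom C \<and> C \<subseteq> A"
    have split: "\<exists>S'. (S' \<in> Inv \<and> V S' = 1 \<and> S' \<subseteq> A) \<and> (S' \<subseteq> S \<and> V (S - S') = 1)"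
      if S: "S \<in> Inv \<and> V S = 1 \<and> S \<subseteq> A" for S
    proof -
      from no_atom S have "\<not> atom S" by blast
      with S obtain S' where S': "S' \<in> Inv" "S' \<subseteq> S" "V S' \<noteq> 0" "V (S - S') \<noteq> 0"
        unfolding atom_def by blast
      moreover have "S - S' \<in> Inv" using S S' by (intro invariant_sets_Diff) auto
      ultimately have "V S' = 1" "V (S - S') = 1" using V_invariant_set by blast+
      with S S' show ?thesis by blast
    qed
    have "\<exists>Y. \<forall>n. (Y n \<in> Inv \<and> V (Y n) = 1 \<and> Y n \<subseteq> A) \<and> (Y (Suc n) \<subseteq> Y n \<and> V (Y n - Y (Suc n)) = 1)"
    proof (rule dependent_nat_choice)
      show "\<exists>S. S \<in> Inv \<and> V S = 1 \<and> S \<subseteq> A" using A by blast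
      fix S :: "'a set" and n assume "S \<in> Inv \<and> V S = 1 \<and> S \<subseteq> A"
      then show "\<exists>S'. (S' \<in> Inv \<and> V S' = 1 \<and> S' \<subseteq> A) \<and> (S' \<subseteq> S \<and> V (S - S') = 1)" by (rule split)
    qed
    then obtain Y where "\<forall>n. (Y n \<in> Inv \<and> V (Y n) = 1 \<and> Y n \<subseteq> A) \<and> (Y (Suc n) \<subseteq> Y n \<and> V (Y n - Y (Suc n)) = 1)" ..
    then have Y: "Y n \<in> Inv" "Y (Suc n) \<subseteq> Y n" "V (Y n - Y (Suc n)) = 1" for n by simp_all
    have "disjoint_family (\<lambda>n. Y n - Y (Suc n))"
      using Y(2) by (rule disjoint_family_decseq_Diff)
    moreover have "Y n - Y (Suc n) \<in> sets M" for n
      using Y(1) by (intro invariant_sets_sets invariant_sets_Diff)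
    ultimately show False
      using not_disjoint_family_V_eq_1[OF continuous, of "\<lambda>n. Y n - Y (Suc n)"] Y(3) by blast
  qed
  then show ?thesis using that by blast
qed

definition atom_partition :: "'a set set \<Rightarrow> bool" where
  "atom_partition \<C> \<longleftrightarrow> finite \<C> \<and> (\<forall>C\<in>\<C>. atom C) \<and> disjoint \<C> \<and> V (space M - \<Union>\<C>) = 0"

lemma exists_atom_outside:
  assumes fin: "finite \<C>" and atoms: "\<And>C. C \<in> \<C> \<Longrightarrow> atom C" and rest: "V (space M - \<Union>\<C>) \<noteq> 0"
  obtains C where "atom C" "C \<inter> \<Union>\<C> = {}" "C \<notin> \<C>"
proof -
  have inv: "space M - \<Union>\<C> \<in> Inv"
    using fin atoms by (intro invariant_sets_Diff invariant_sets_space invariant_sets_UN[of \<C> id, simplified])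
      (auto intro: countable_finite atom_invariant)
  with rest have "V (space M - \<Union>\<C>) = 1" using V_invariant_set by blast
  with inv obtain C where C: "atom C" "C \<subseteq> space M - \<Union>\<C>"
    using exists_atom_subset by blast
  moreover have "C \<notin> \<C>"
  proof
    assume "C \<in> \<C>"
    with C(2) have "C = {}" by blast
    with V_atom[OF C(1)] show False by (simp add: V_empty)
  qed
  ultimately show ?thesis using that by blast
qed

lemma exists_atom_partition: "\<exists>\<C>. atom_partition \<C>"
proof (rule ccontr)
  assume none: "\<nexists>\<C>. atom_partition \<C>"
  let ?P = "\<lambda>\<C>. finite \<C> \<and> (\<forall>C\<in>\<C>. atom C) \<and> disjoint \<C>"
  have grow: "\<exists>\<C>'. ?P \<C>' \<and> (\<exists>C. atom C \<and> C \<inter> \<Union>\<C> = {} \<and> \<C>' = insert C \<C>)" if "?P \<C>" for \<C>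
  proof -
    from that have fin: "finite \<C>" and atoms: "\<And>C. C \<in> \<C> \<Longrightarrow> atom C" by blast+
    have "V (space M - \<Union>\<C>) \<noteq> 0" using none that unfolding atom_partition_def by blast
    then obtain C where C: "atom C" "C \<inter> \<Union>\<C> = {}" "C \<notin> \<C>"
      using exists_atom_outside[OF fin atoms] by blast
    then have "?P (insert C \<C>)" using that unfolding pairwise_def disjnt_def by blast
    with C show ?thesis by blast
  qed
  have "\<exists>\<S>. \<forall>n. ?P (\<S> n) \<and> (\<exists>C. atom C \<and> C \<inter> \<Union>(\<S> n) = {} \<and> \<S> (Suc n) = insert C (\<S> n))"
  proof (rule dependent_nat_choice)
    show "\<exists>\<C>. ?P \<C>" by (rule exI[of _ "{}"]) simp
    fix \<C> :: "'a set set" and n assume "?P \<C>"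
    then show "\<exists>\<C>'. ?P \<C>' \<and> (\<exists>C. atom C \<and> C \<inter> \<Union>\<C> = {} \<and> \<C>' = insert C \<C>)" by (rule grow)
  qed
  then obtain \<S> where "\<forall>n. ?P (\<S> n) \<and> (\<exists>C. atom C \<and> C \<inter> \<Union>(\<S> n) = {} \<and> \<S> (Suc n) = insert C (\<S> n))" ..
  then have "\<forall>n. \<exists>C. atom C \<and> C \<inter> \<Union>(\<S> n) = {} \<and> \<S> (Suc n) = insert C (\<S> n)" by blast
  then have "\<exists>X. \<forall>n. atom (X n) \<and> X n \<inter> \<Union>(\<S> n) = {} \<and> \<S> (Suc n) = insert (X n) (\<S> n)"
    by (rule choice)
  then obtain X where "\<forall>n. atom (X n) \<and> X n \<inter> \<Union>(\<S> n) = {} \<and> \<S> (Suc n) = insert (X n) (\<S> n)" ..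
  then have X: "atom (X n)" "X n \<inter> \<Union>(\<S> n) = {}" "\<S> (Suc n) = insert (X n) (\<S> n)" for n
    by simp_all
  have "(\<lambda>n. \<Union>(\<S> (Suc n)) - \<Union>(\<S> n)) = X" by (rule ext) (use X(2,3) in auto)
  moreover have "disjoint_family (\<lambda>n. \<Union>(\<S> (Suc n)) - \<Union>(\<S> n))"
    using X(3) by (intro disjoint_family_Suc) auto
  ultimately show False
    using not_disjoint_family_V_eq_1[OF continuous atom_sets[OF X(1)] V_atom[OF X(1)]] by simp
qed

lemma measure_atom_invariant_set:
  assumes C: "atom C" and P: "P \<in> probs_on M"
    and null: "\<And>S. S \<in> sets M \<Longrightarrow> V S = 0 \<Longrightarrow> measure P S = 0"
    and full: "measure P C = 1" and S: "S \<in> Inv"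
  shows "measure P S = (if V (S \<inter> C) = 0 then 0 else 1)"
proof -
  interpret prob_space P using P by (rule probs_onD)
  have sets: "sets P = sets M" using P by (rule probs_onD)
  have C_sets: "C \<in> sets M" and S_sets: "S \<in> sets M"
    using C S by (simp_all add: atom_sets invariant_sets_sets)
  have "measure P (S - C) \<le> measure P (space M - C)"
    using S_sets C_sets sets sets.sets_into_space[OF S_sets] by (intro finite_measure_mono) auto
  also have "\<dots> = 0"
    using prob_compl[of C] C_sets sets full sets_eq_imp_space_eq[OF sets] by simp
  finally have "measure P (S - C) = 0" using measure_nonneg[of P "S - C"] by linarith
  then have eq: "measure P S = measure P (S \<inter> C)"
    using finite_measure_Diff'[of S C] S_sets C_sets sets by simp
  show ?thesis
  proof (cases "V (S \<inter> C) = 0")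
    case True
    then show ?thesis using eq null[of "S \<inter> C"] S_sets C_sets by simp
  next
    case False
    have "S \<inter> C \<in> Inv" using S C by (simp add: atom_invariant invariant_sets_Int)
    with C False have "V (C - S \<inter> C) = 0" unfolding atom_def by blast
    then have "measure P (C - S \<inter> C) = 0" using null[of "C - S \<inter> C"] C_sets S_sets by simp
    then have "measure P (S \<inter> C) = 1"
      using finite_measure_Diff[of C "S \<inter> C"] full C_sets S_sets sets by auto
    then show ?thesis using eq False by simp
  qed
qed

lemma invariant_probs_eq_on_atom:
  assumes C: "atom C"
    and \<mu>: "invariant_prob M T \<mu>" "\<And>S. S \<in> sets M \<Longrightarrow> V S = 0 \<Longrightarrow> measure \<mu> S = 0" "measure \<mu> C = 1"
    and \<nu>: "invariant_prob M T \<nu>" "\<And>S. S \<in> sets M \<Longrightarrow> V S = 0 \<Longrightarrow> measure \<nu> S = 0" "measure \<nu> C = 1"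
  shows "\<mu> = \<nu>"
  using \<mu>(1) \<nu>(1)
  by (rule invariant_probs_eq)
    (simp add: measure_atom_invariant_set[OF C invariant_prob_probs_on[OF \<mu>(1)] \<mu>(2,3)]
      measure_atom_invariant_set[OF C invariant_prob_probs_on[OF \<nu>(1)] \<nu>(2,3)])

lemma exists_invariant_prob_on_atom_approx:
  assumes C: "atom C" and e: "e > 0"
  obtains U where "invariant_prob M T U" "measure U C = 1"
    "\<And>S. S \<in> sets M \<Longrightarrow> V S = 0 \<Longrightarrow> measure U S = 0"
    "\<And>A. A \<in> sets M \<Longrightarrow> measure U A \<le> V A + e"
proof -
  have C_inv: "C \<in> Inv" and C_sets: "C \<in> sets M" using C by (simp_all add: atom_invariant atom_sets)
  define d where "d = min e (1/2)"
  have d: "0 < d" "d \<le> e" "d \<le> 1/2" using e unfolding d_def by auto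
  obtain Q where Q: "Q \<in> core M V" "V C - d < measure Q C"
    using exists_core_measure_gt[OF C_sets d(1)] by blast
  obtain R where R: "invariant_prob M T R" "\<And>A. A \<in> sets M \<Longrightarrow> measure R A \<le> V A"
    "\<And>A. A \<in> Inv \<Longrightarrow> measure R A = measure Q A"
    using exists_invariant_prob_le[OF core_probs_on[OF Q(1)] measure_le_V[OF Q(1)] V_invariant continuous]
    by blast
  interpret R: prob_space R using R(1) by (auto dest: invariant_prob_probs_on probs_onD)
  have sets_R: "sets R = sets M" using R(1) by (auto dest: invariant_prob_probs_on probs_onD)
  have RC: "1 - d < measure R C" using Q(2) R(3)[OF C_inv] V_atom[OF C] by simp
  then have pos: "0 < measure R C" using d(3) by linarith
  define U where "U = uniform_measure R C"
  have U_eq: "measure U A = measure R (C \<inter> A) / measure R C" if "A \<in> sets M" for A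
    unfolding U_def using R.measure_uniform_measure_pos[OF pos] that sets_R by simp
  have R_Int: "measure R (C \<inter> A) \<le> measure R A" if "A \<in> sets M" for A
    using that C_sets sets_R by (intro R.finite_measure_mono) auto
  show ?thesis
  proof
    show "invariant_prob M T U"
      unfolding U_def by (rule invariant_prob_uniform_measure[OF R(1) C_inv pos])
    show "measure U C = 1" using U_eq[OF C_sets] pos by simp
    show "measure U S = 0" if "S \<in> sets M" "V S = 0" for S
    proof -
      have "measure R (C \<inter> S) = 0"
        using R_Int[OF that(1)] R(2)[OF that(1)] that(2) measure_nonneg[of R "C \<inter> S"] by linarith
      then show ?thesis using U_eq[OF that(1)] by simp
    qed
    show "measure U A \<le> V A + e" if A: "A \<in> sets M" for A
    proof -
      have "measure U A \<le> measure R A + (1 - measure R C)"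
        unfolding U_def using A sets_R by (intro R.measure_uniform_measure_le[OF pos]) simp
      with R(2)[OF A] RC d(2) show ?thesis by linarith
    qed
  qed
qed

lemma exists_ergodic_on_atom:
  assumes C: "atom C"
  obtains E where "E \<in> core M V" "ergodic_prob M T E" "measure E C = 1"
proof -
  obtain U where U: "invariant_prob M T U" "measure U C = 1"
    "\<And>S. S \<in> sets M \<Longrightarrow> V S = 0 \<Longrightarrow> measure U S = 0"
    using exists_invariant_prob_on_atom_approx[OF C zero_less_one] by blast
  \<comment> \<open>All the approximate solutions coincide with \<open>U\<close>, so \<open>U\<close> lies below \<open>V\<close>.\<close>
  have "measure U A \<le> V A" if A: "A \<in> sets M" for A
  proof (rule field_le_epsilon)
    fix e :: real assume e: "0 < e"
    obtain W where W: "invariant_prob M T W" "measure W C = 1"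
      "\<And>S. S \<in> sets M \<Longrightarrow> V S = 0 \<Longrightarrow> measure W S = 0"
      "\<And>A. A \<in> sets M \<Longrightarrow> measure W A \<le> V A + e"
      using exists_invariant_prob_on_atom_approx[OF C e] by blast
    have "U = W" using C U(1,3,2) W(1,3,2) by (rule invariant_probs_eq_on_atom)
    then show "measure U A \<le> V A + e" using W(4)[OF A] by simp
  qed
  then have "U \<in> core M V" using invariant_prob_probs_on[OF U(1)] unfolding core_def by blast
  moreover have "ergodic_prob M T U"
    unfolding ergodic_prob_def T_ergodic_fun_def
    using U(1) measure_atom_invariant_set[OF C invariant_prob_probs_on[OF U(1)] U(3) U(2)] by simp
  ultimately show ?thesis using that U(2) by blast
qed

text \<open>Only for an atom \<open>C\<close> is the description unique (lemma \<open>ergodic_on_eq\<close>); for other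
  sets \<open>THE\<close> yields an unspecified measure.\<close>

definition ergodic_on :: "'a set \<Rightarrow> 'a measure" where
  "ergodic_on C = (THE E. E \<in> core M V \<and> ergodic_prob M T E \<and> measure E C = 1)"

lemma ergodic_on_eq:
  assumes C: "atom C" and E: "E \<in> core M V" "invariant_prob M T E" "measure E C = 1"
  shows "ergodic_on C = E"
proof -
  have unique: "E' = E" if "E' \<in> core M V" "invariant_prob M T E'" "measure E' C = 1" for E'
    using C that(2) measure_eq_0_if_V_eq_0[OF that(1)] that(3) E(2) measure_eq_0_if_V_eq_0[OF E(1)] E(3)
    by (rule invariant_probs_eq_on_atom)
  obtain E0 where E0: "E0 \<in> core M V" "ergodic_prob M T E0" "measure E0 C = 1"
    using exists_ergodic_on_atom[OF C] by blast
  have "E0 = E" using unique E0 ergodic_prob_invariant by blast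
  have "ergodic_on C = E0"
    unfolding ergodic_on_def
  proof (rule the_equality)
    show "E0 \<in> core M V \<and> ergodic_prob M T E0 \<and> measure E0 C = 1" using E0 by blast
    fix E' assume "E' \<in> core M V \<and> ergodic_prob M T E' \<and> measure E' C = 1"
    then have "E' = E" using unique ergodic_prob_invariant by blast
    with \<open>E0 = E\<close> show "E' = E0" by simp
  qed
  with \<open>E0 = E\<close> show ?thesis by simp
qed

lemma ergodic_on:
  assumes "atom C"
  shows "ergodic_on C \<in> core M V" "ergodic_prob M T (ergodic_on C)" "measure (ergodic_on C) C = 1"
proof -
  obtain E where E: "E \<in> core M V" "ergodic_prob M T E" "measure E C = 1"
    using exists_ergodic_on_atom[OF assms] by blast
  then have "ergodic_on C = E" using ergodic_on_eq[OF assms] ergodic_prob_invariant by blast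
  with E show "ergodic_on C \<in> core M V" "ergodic_prob M T (ergodic_on C)" "measure (ergodic_on C) C = 1"
    by simp_all
qed

lemma measure_eq_sum_atom_partition:
  assumes \<C>: "atom_partition \<C>" and P: "P \<in> core M V" and B: "B \<in> sets M"
  shows "measure P B = (\<Sum>C\<in>\<C>. measure P (C \<inter> B))"
proof -
  interpret prob_space P using core_probs_on[OF P] by (rule probs_onD)
  have sets: "sets P = sets M" using core_probs_on[OF P] by (rule probs_onD)
  have fin: "finite \<C>" and atoms: "\<And>C. C \<in> \<C> \<Longrightarrow> atom C" and disj: "disjoint \<C>"
    and rest: "V (space M - \<Union>\<C>) = 0"
    using \<C> unfolding atom_partition_def by blast+
  have U: "\<Union>\<C> \<in> sets M" using fin atoms atom_sets by (intro sets.finite_Union) auto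
  have null: "measure P (B - \<Union>\<C>) = 0"
  proof -
    have B': "B - \<Union>\<C> \<in> sets M" using B U by (rule sets.Diff)
    have "V (B - \<Union>\<C>) \<le> V (space M - \<Union>\<C>)"
      using B' U sets.sets_into_space[OF B] by (intro V_mono) auto
    with rest V_nonneg[OF B'] have "V (B - \<Union>\<C>) = 0" by linarith
    with B' show ?thesis by (rule measure_eq_0_if_V_eq_0[OF P])
  qed
  have "B \<inter> \<Union>\<C> = (\<Union>C\<in>\<C>. C \<inter> B)" by blast
  then have "measure P B = measure P (\<Union>C\<in>\<C>. C \<inter> B)"
    using finite_measure_Diff'[of B "\<Union>\<C>"] null B U sets by simp
  also have "\<dots> = (\<Sum>C\<in>\<C>. measure P (C \<inter> B))"
  proof (rule finite_measure_finite_Union[OF fin])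
    show "(\<lambda>C. C \<inter> B) ` \<C> \<subseteq> sets P" using atoms B sets by (auto simp: atom_sets)
    show "disjoint_family_on (\<lambda>C. C \<inter> B) \<C>"
      using disj unfolding disjoint_family_on_def pairwise_def disjnt_def by blast
  qed
  finally show ?thesis .
qed

lemma ergodic_core_eq_ergodic_on_image:
  assumes \<C>: "atom_partition \<C>"
  shows "{P \<in> core M V. ergodic_prob M T P} = ergodic_on ` \<C>"
proof
  have atoms: "\<And>C. C \<in> \<C> \<Longrightarrow> atom C" using \<C> unfolding atom_partition_def by blast
  then show "ergodic_on ` \<C> \<subseteq> {P \<in> core M V. ergodic_prob M T P}" using ergodic_on by blast
  show "{P \<in> core M V. ergodic_prob M T P} \<subseteq> ergodic_on ` \<C>"
  proof
    fix E assume "E \<in> {P \<in> core M V. ergodic_prob M T P}"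
    then have E: "E \<in> core M V" "ergodic_prob M T E" by blast+
    have "(\<Sum>C\<in>\<C>. measure E C) = measure E (space M)"
      using measure_eq_sum_atom_partition[OF \<C> E(1) sets.top] atoms atom_sets sets.sets_into_space
      by (auto intro!: sum.cong)
    also have "\<dots> = 1" using core_probs_on[OF E(1)] by (rule measure_space_probs_on)
    finally have "\<exists>C\<in>\<C>. measure E C \<noteq> 0" by (rule sum_eq_1_imp_ex_nonzero)
    then obtain C where C: "C \<in> \<C>" "measure E C \<noteq> 0" ..
    then have "measure E C = 1" using ergodic_probD[OF E(2)] atoms atom_invariant by blast
    then have "E = ergodic_on C"
      using ergodic_on_eq[OF atoms[OF C(1)] E(1) ergodic_prob_invariant[OF E(2)]] by simp
    with C(1) show "E \<in> ergodic_on ` \<C>" by blast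
  qed
qed

lemma measure_Int_atom:
  assumes C: "atom C" and P: "P \<in> core M V" "invariant_prob M T P" and B: "B \<in> sets M"
  shows "measure P (C \<inter> B) = measure P C * measure (ergodic_on C) B"
proof -
  interpret prob_space P using core_probs_on[OF P(1)] by (rule probs_onD)
  have sets: "sets P = sets M" using core_probs_on[OF P(1)] by (rule probs_onD)
  have C_sets: "C \<in> sets M" using C by (rule atom_sets)
  have P_Int: "measure P (C \<inter> A) \<le> measure P A" if "A \<in> sets M" for A
    using that C_sets sets by (intro finite_measure_mono) auto
  show ?thesis
  proof (cases "measure P C = 0")
    case True
    moreover have "measure P (C \<inter> B) \<le> measure P C"
      using B C_sets sets by (intro finite_measure_mono) auto
    ultimately have "measure P (C \<inter> B) = 0" using measure_nonneg[of P "C \<inter> B"] by linarith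
    with True show ?thesis by simp
  next
    case False
    then have pos: "measure P C > 0" by (simp add: zero_less_measure_iff)
    let ?U = "uniform_measure P C"
    have U_eq: "measure ?U A = measure P (C \<inter> A) / measure P C" if "A \<in> sets M" for A
      using measure_uniform_measure_pos[OF pos] that sets by simp
    have "?U = ergodic_on C"
    proof (rule invariant_probs_eq_on_atom[OF C])
      show "invariant_prob M T ?U" by (rule invariant_prob_uniform_measure[OF P(2) atom_invariant[OF C] pos])
      show "measure ?U S = 0" if "S \<in> sets M" "V S = 0" for S
        using U_eq[OF that(1)] P_Int[OF that(1)] measure_eq_0_if_V_eq_0[OF P(1) that] measure_nonneg[of P "C \<inter> S"]
        by simp
      show "measure ?U C = 1" using U_eq[OF C_sets] pos by simp
      show "invariant_prob M T (ergodic_on C)" using ergodic_on(2)[OF C] by (rule ergodic_prob_invariant)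
      show "measure (ergodic_on C) S = 0" if "S \<in> sets M" "V S = 0" for S
        using ergodic_on(1)[OF C] that by (rule measure_eq_0_if_V_eq_0)
      show "measure (ergodic_on C) C = 1" using C by (rule ergodic_on(3))
    qed
    with U_eq[OF B] pos show ?thesis by (simp add: field_simps)
  qed
qed

lemma inj_on_ergodic_on:
  assumes \<C>: "atom_partition \<C>"
  shows "inj_on ergodic_on \<C>"
proof (rule inj_onI, rule ccontr)
  fix C C' assume C: "C \<in> \<C>" "C' \<in> \<C>" and eq: "ergodic_on C = ergodic_on C'" and "C \<noteq> C'"
  with \<C> have disj: "C \<inter> C' = {}" unfolding atom_partition_def pairwise_def disjnt_def by blast
  have atoms: "atom C" "atom C'" using \<C> C unfolding atom_partition_def by blast+
  let ?E = "ergodic_on C"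
  interpret prob_space ?E using core_probs_on[OF ergodic_on(1)[OF atoms(1)]] by (rule probs_onD)
  have sets: "sets ?E = sets M" using core_probs_on[OF ergodic_on(1)[OF atoms(1)]] by (rule probs_onD)
  have "measure ?E (C \<union> C') = measure ?E C + measure ?E C'"
    using disj atoms sets by (intro finite_measure_Union) (auto simp: atom_sets)
  also have "\<dots> = 2" using ergodic_on(3)[OF atoms(1)] ergodic_on(3)[OF atoms(2)] eq by simp
  finally show False using prob_le_1[of "C \<union> C'"] by simp
qed

lemma invariant_core_in_prob_convex_hull:
  assumes \<C>: "atom_partition \<C>" and P: "P \<in> core M V" "invariant_prob M T P"
  shows "P \<in> prob_convex_hull M (ergodic_on ` \<C>)"
proof -
  have fin: "finite \<C>" and atoms: "\<And>C. C \<in> \<C> \<Longrightarrow> atom C" using \<C> unfolding atom_partition_def by blast+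
  have inj: "inj_on ergodic_on \<C>" using \<C> by (rule inj_on_ergodic_on)
  define c where "c Q = measure P (the_inv_into \<C> ergodic_on Q)" for Q
  have c: "c (ergodic_on C) = measure P C" if "C \<in> \<C>" for C
    unfolding c_def using the_inv_into_f_f[OF inj that] by simp
  have comb: "measure P A = (\<Sum>Q\<in>ergodic_on ` \<C>. c Q * measure Q A)" if A: "A \<in> sets M" for A
  proof -
    have "measure P A = (\<Sum>C\<in>\<C>. measure P (C \<inter> A))"
      by (rule measure_eq_sum_atom_partition[OF \<C> P(1) A])
    also have "\<dots> = (\<Sum>C\<in>\<C>. c (ergodic_on C) * measure (ergodic_on C) A)"
      using measure_Int_atom[OF atoms P A] c by (intro sum.cong) auto
    also have "\<dots> = (\<Sum>Q\<in>ergodic_on ` \<C>. c Q * measure Q A)" by (simp add: sum.reindex[OF inj])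
    finally show ?thesis .
  qed
  have "measure (ergodic_on C) (space M) = 1" if "C \<in> \<C>" for C
    using ergodic_on(1)[OF atoms[OF that]] by (intro measure_space_probs_on core_probs_on)
  then have "(\<Sum>Q\<in>ergodic_on ` \<C>. c Q) = (\<Sum>Q\<in>ergodic_on ` \<C>. c Q * measure Q (space M))"
    by (intro sum.cong) auto
  also have "\<dots> = 1"
    using comb[OF sets.top] measure_space_probs_on[OF core_probs_on[OF P(1)]] by simp
  finally have sum_c: "(\<Sum>Q\<in>ergodic_on ` \<C>. c Q) = 1" .
  have c_nonneg: "\<forall>Q\<in>ergodic_on ` \<C>. 0 \<le> c Q" unfolding c_def by simp
  show ?thesis
    unfolding prob_convex_hull_def
    by (intro CollectI conjI exI[of _ "ergodic_on ` \<C>"] exI[of _ c] subset_refl ballI)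
      (use core_probs_on[OF P(1)] fin sum_c c_nonneg comb in auto)
qed

end

theorem theorem3p3:
  fixes M :: "'a measure" and T :: "'a \<Rightarrow> 'a" and V :: "'a set \<Rightarrow> real"
  assumes "T \<in> measurable M M"
    and "upper_probability M V"
    and "continuous_capacity M V"
    and "T_invariant_fun M T V"
    and "T_ergodic_fun M T V"
  shows "finite {P \<in> core M V. ergodic_prob M T P}
    \<and> {P \<in> core M V. invariant_prob M T P}
        = prob_convex_hull M {P \<in> core M V. ergodic_prob M T P}"
proof -
  interpret ergodic_upper_prob M V T
    by unfold_locales (fact assms)+
  let ?E = "{P \<in> core M V. ergodic_prob M T P}" and ?I = "{P \<in> core M V. invariant_prob M T P}"
  obtain \<C> where \<C>: "atom_partition \<C>" using exists_atom_partition by blast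
  have ergodic: "?E = ergodic_on ` \<C>" using \<C> by (rule ergodic_core_eq_ergodic_on_image)
  have "prob_convex_hull M ?E \<subseteq> ?I"
  proof
    fix P assume P: "P \<in> prob_convex_hull M ?E"
    have "P \<in> core M V" using prob_convex_hull_subset_core[of ?E M V] P by blast
    moreover have "invariant_prob M T P"
      by (rule prob_convex_hull_invariant[OF _ P]) (simp add: ergodic_prob_invariant)
    ultimately show "P \<in> ?I" by blast
  qed
  moreover have "?I \<subseteq> prob_convex_hull M ?E"
    unfolding ergodic using invariant_core_in_prob_convex_hull[OF \<C>] by blast
  ultimately have "?I = prob_convex_hull M ?E" by (rule subset_antisym[rotated])
  moreover have "finite ?E" using \<C> unfolding ergodic atom_partition_def by blast
  ultimately show ?thesis by blast
qed

end
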